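(* Let $X$ be a real Banach space, $h:X\to\mathbb R\cup\{+\infty\}$ proper and lower semicontinuous, $\bar x$ a global minimizer of $h$, and $p,q\in(1,\infty)$ with $p^{-1}+q^{-1}=1$. If $x\in X$ and $\xi\in X^*$ satisfy $x\in\operatorname{argmin}_{y\in X}\{\sqrt[p]{h(y)-h(\bar x)}-\langle\xi,y\rangle\}$, then $$x\in\operatorname{argmin}_{y\in X}\Big\{h(y)-p\sqrt[q]{h(x)-h(\bar x)}\,\langle\xi,y\rangle\Big\}.$$
   Context: Here $\sqrt[p]{+\infty}=+\infty$. *)

theory Defs
  imports "HOL-Analysis.Analysis" "HOL-Library.Extended_Real"
begin

definition lsc_fun :: "('a::topological_space \<Rightarrow> ereal) \<Rightarrow> bool" where
  "lsc_fun h \<longleftrightarrow> (\<forall>x. h x \<le> Liminf (at x) h)"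

definition proper_fun :: "('a \<Rightarrow> ereal) \<Rightarrow> bool" where
  "proper_fun h \<longleftrightarrow> (\<forall>x. h x \<noteq> -\<infinity>) \<and> (\<exists>x. h x \<noteq> \<infinity>)"

definition argmin_set :: "('a \<Rightarrow> ereal) \<Rightarrow> 'a set" where
  "argmin_set f = {x. \<forall>y. f x \<le> f y}"

text \<open>p-th root on [0, +infinity], with root of +infinity = +infinity
  (only used on nonnegative arguments).\<close>
definition eroot :: "real \<Rightarrow> ereal \<Rightarrow> ereal" where
  "eroot p t = (if t = \<infinity> then \<infinity> else ereal (real_of_ereal t powr (1 / p)))"

end

theory Submission
  imports Defs
begin

text \<open>
  Write \<open>u = h x - h xbar\<close> and \<open>v = h y - h xbar\<close>. Minimality of \<open>x\<close> gives
  \<open>\<xi> y - \<xi> x \<le> v\<^sup>1\<^sup>/\<^sup>p - u\<^sup>1\<^sup>/\<^sup>p\<close>, and the tangent-line inequality for the convex function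
  \<open>t \<mapsto> t\<^sup>p\<close> at \<open>t = u\<^sup>1\<^sup>/\<^sup>p\<close>, whose slope there is \<open>p u\<^sup>1\<^sup>/\<^sup>q\<close> (equivalently, Young's inequality), turns this into
  \<open>p u\<^sup>1\<^sup>/\<^sup>q (\<xi> y - \<xi> x) \<le> v - u\<close>, which is the claimed minimality.
\<close>

lemma conjugate_powr_tangent_le:
  fixes p q u v :: real
  assumes "1 < p" "1 < q" "1 / p + 1 / q = 1" "0 \<le> u" "0 \<le> v"
  shows "p * u powr (1/q) * (v powr (1/p) - u powr (1/p)) \<le> v - u"
proof -
  define b where "b = v powr (1/p)"
  define c where "c = u powr (1/q)"
  have "b * c \<le> b powr p / p + c powr q / q"
    by (rule Youngs_inequality) (use assms in \<open>auto simp: b_def c_def\<close>)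
  moreover have "b powr p = v" "c powr q = u"
    using assms by (simp_all add: b_def c_def powr_powr)
  moreover have "u powr (1/p) * c = u"
    using assms(3,4) by (simp add: c_def powr_add [symmetric])
  moreover have "p * u / q = (p - 1) * u"
  proof -
    have "p / q = p - 1"
      using assms(1,3) by (simp add: field_simps)
    then show ?thesis
      by (metis times_divide_eq_left mult.commute)
  qed
  ultimately have "p * c * b - p * (u powr (1/p) * c) \<le> v - u"
    using assms(1) by (simp add: field_simps)
  then show ?thesis
    by (simp add: b_def c_def algebra_simps)
qed

lemma eroot_ereal [simp]: "eroot p (ereal t) = ereal (t powr (1 / p))"
  by (simp add: eroot_def)

theorem lemma2p4:
  fixes h :: "'a::banach \<Rightarrow> ereal"
    and xbar x :: 'a
    and \<xi> :: "'a \<Rightarrow> real"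
    and p q :: real
  assumes "proper_fun h"
    and "lsc_fun h"
    and "\<forall>y. h xbar \<le> h y"
    and "1 < p" and "1 < q" and "1 / p + 1 / q = 1"
    and "bounded_linear \<xi>"
    and "x \<in> argmin_set (\<lambda>y. eroot p (h y - h xbar) - ereal (\<xi> y))"
  shows "x \<in> argmin_set (\<lambda>y. h y - ereal p * eroot q (h x - h xbar) * ereal (\<xi> y))"
proof -
  have not_minf: "h y \<noteq> -\<infinity>" for y
    using assms(1) by (simp add: proper_fun_def)
  obtain z where "h z \<noteq> \<infinity>"
    using assms(1) by (auto simp: proper_fun_def)
  then obtain m hz where m: "h xbar = ereal m" and hz: "h z = ereal hz"
    using not_minf[of xbar] not_minf[of z] assms(3) by (cases "h xbar"; cases "h z") auto
  have root_min: "eroot p (h x - m) - \<xi> x \<le> eroot p (h y - m) - \<xi> y" for y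
    using assms(8) m by (simp add: argmin_set_def)
  obtain hx where hx: "h x = ereal hx"
    using root_min[of z] hz not_minf[of x] by (cases "h x") (auto simp: eroot_def)
  define u where "u = hx - m"
  have "h x - p * eroot q (h x - h xbar) * \<xi> x \<le> h y - p * eroot q (h x - h xbar) * \<xi> y" for y
  proof (cases "h y")
    case (real hy)
    have "u powr (1/p) - \<xi> x \<le> (hy - m) powr (1/p) - \<xi> y"
      using root_min[of y] hx real by (simp add: u_def)
    then have "p * u powr (1/q) * (\<xi> y - \<xi> x)
        \<le> p * u powr (1/q) * ((hy - m) powr (1/p) - u powr (1/p))"
      using assms(4) by (intro mult_left_mono) auto
    also have "\<dots> \<le> (hy - m) - u"
      using assms(3)[rule_format, of x] assms(3)[rule_format, of y] hx real m
      by (intro conjugate_powr_tangent_le[OF assms(4-6)]) (auto simp: u_def)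
    finally have "p * u powr (1/q) * (\<xi> y - \<xi> x) \<le> (hy - m) - u" .
    then show ?thesis
      using hx real m by (simp add: u_def algebra_simps)
  qed (use hx m not_minf in auto)
  then show ?thesis
    by (simp add: argmin_set_def)
qed

end
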